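(* Let $l\ge 1$ and $0\le k\le l-1$. The $(k+1)$-qubit gate $C^kZ^{2^{k-l+1}}$ can be implemented exactly by a circuit consisting of CNOT gates and a single layer (i.e. gates acting in parallel on distinct qubits) of the single-qubit gates $Z^{2^{1-l}}$ and $(Z^{2^{1-l}})^{-1}$, using additional ancilla qubits initialized to $|0\rangle$ and returned to $|0\rangle$.
   Context: $C^kZ^{2^{k-l+1}}$ is the diagonal gate on $k+1$ qubits acting as the identity on all computational basis states except $|1^{k+1}\rangle$, which it multiplies by the phase $e^{i\pi 2^{1+k-l}}$. The single-qubit gate $Z^{2^{1-l}}=|0\rangle\langle0|+e^{i\pi 2^{1-l}}|1\rangle\langle1|$. *)

theory Defs
  imports Complex_Main
begin

text \<open>Computational basis states of an n-qubit register are bool lists of length n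
  (qubit i is list position i, True = |1>). A state vector is a function from
  basis labels to complex amplitudes (only labels of the register length matter).\<close>

type_synonym qstate = "bool list \<Rightarrow> complex"

datatype gate = CNOT nat nat | Phase nat complex

fun apply_gate :: "gate \<Rightarrow> qstate \<Rightarrow> qstate" where
  "apply_gate (CNOT c t) \<psi> = (\<lambda>x. \<psi> (x[t := (x ! t \<noteq> x ! c)]))"
| "apply_gate (Phase j z) \<psi> = (\<lambda>x. (if x ! j then z else 1) * \<psi> x)"

fun run :: "gate list \<Rightarrow> qstate \<Rightarrow> qstate" where
  "run [] \<psi> = \<psi>"
| "run (g # gs) \<psi> = run gs (apply_gate g \<psi>)"

definition is_cnot :: "nat \<Rightarrow> gate \<Rightarrow> bool" where
  "is_cnot n g \<longleftrightarrow> (\<exists>c t. g = CNOT c t \<and> c < n \<and> t < n \<and> c \<noteq> t)"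

text \<open>The single-qubit gate Z^(2^(1-l)) = diag(1, e^(i pi 2^(1-l))).\<close>
definition omega :: "nat \<Rightarrow> complex" where
  "omega l = cis (pi * 2 powr (1 - real l))"

definition phase_layer :: "nat \<Rightarrow> nat \<Rightarrow> gate list \<Rightarrow> bool" where
  "phase_layer n l L \<longleftrightarrow>
     (\<exists>js zs. L = map2 Phase js zs \<and> length js = length zs \<and> distinct js \<and>
        (\<forall>j\<in>set js. j < n) \<and> (\<forall>z\<in>set zs. z = omega l \<or> z = inverse (omega l)))"

definition embed :: "nat \<Rightarrow> nat \<Rightarrow> qstate \<Rightarrow> qstate" where
  "embed d a \<psi> = (\<lambda>y. if length y = d + a \<and> drop d y = replicate a False
                       then \<psi> (take d y) else 0)"

definition CkZ :: "nat \<Rightarrow> nat \<Rightarrow> qstate \<Rightarrow> qstate" where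
  "CkZ k l \<psi> = (\<lambda>x. (if x = replicate (k+1) True
                       then cis (pi * 2 powr (1 + real k - real l)) else 1) * \<psi> x)"

end

theory Submission
  imports Defs
begin

text \<open>Attach one ancilla to every subset S of the k + 1 input qubits and compute into it,
  with CNOTs, the parity x_S of the input bits in S. Applying \<omega> = exp(i \<pi> 2^(1 - l)) to the
  ancillas with |S| odd and \<omega>^(-1) to the others, then uncomputing the parities, multiplies
  the basis state x by \<omega>^e with e = \<Sum>_S (-1)^(|S| + 1) x_S. Since 2 x_S = 1 - (-1)^|S \<inter> x|
  and \<Sum>_S (-1)^|S| (-1)^|S \<inter> x| vanishes unless x = 1^(k+1), where it is 2^(k+1), the exponent
  e is 2^k on 1^(k+1) and 0 elsewhere.\<close>

lemma run_append: "run (xs @ ys) \<psi> = run ys (run xs \<psi>)"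
  by (induction xs arbitrary: \<psi>) auto

text \<open>A CNOT circuit acts on a state by precomposition with a relabelling of the basis, so the
  relabelling applies the gates in reverse order.\<close>
fun relabel :: "gate list \<Rightarrow> bool list \<Rightarrow> bool list" where
  "relabel [] x = x"
| "relabel (CNOT c t # gs) x = (let z = relabel gs x in z[t := (z ! t \<noteq> z ! c)])"
| "relabel (Phase j w # gs) x = relabel gs x"

lemma run_CNOTs:
  assumes "\<forall>g\<in>set gs. \<exists>c t. g = CNOT c t"
  shows "run gs \<psi> = \<psi> \<circ> relabel gs"
  using assms by (induction gs arbitrary: \<psi>) (auto simp: Let_def o_def)

lemma length_relabel [simp]: "length (relabel gs x) = length x"
  by (induction gs x rule: relabel.induct) (auto simp: Let_def)

lemma run_map2_Phase:
  "run (map2 Phase js zs) \<psi> x = (\<Prod>(j, z)\<leftarrow>zip js zs. if x ! j then z else 1) * \<psi> x"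
proof (induction js arbitrary: zs \<psi>)
  case (Cons j js)
  then show ?case by (cases zs) auto
qed simp

definition flip_count :: "gate list \<Rightarrow> bool list \<Rightarrow> nat \<Rightarrow> nat" where
  "flip_count gs y j =
     length (filter (\<lambda>g. case g of CNOT c t \<Rightarrow> t = j \<and> y ! c | Phase _ _ \<Rightarrow> False) gs)"

definition cnots_into_ancillas :: "nat \<Rightarrow> nat \<Rightarrow> gate list \<Rightarrow> bool" where
  "cnots_into_ancillas n N gs \<longleftrightarrow> (\<forall>g\<in>set gs. \<exists>c t. g = CNOT c t \<and> c < n \<and> n \<le> t \<and> t < N)"

lemma flip_count_data:
  "cnots_into_ancillas n N gs \<Longrightarrow> j < n \<Longrightarrow> flip_count gs y j = 0"
  unfolding flip_count_def cnots_into_ancillas_def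
  by (auto simp: filter_empty_conv split: gate.splits)

lemma nth_relabel:
  assumes "cnots_into_ancillas n (length y) gs" and "j < length y"
  shows "relabel gs y ! j = (y ! j \<noteq> odd (flip_count gs y j))"
  using assms
proof (induction gs arbitrary: j)
  case Nil
  then show ?case by (simp add: flip_count_def)
next
  case (Cons g gs)
  then obtain c t where g: "g = CNOT c t" and ct: "c < n" "n \<le> t" "t < length y"
    by (auto simp: cnots_into_ancillas_def)
  have gs: "cnots_into_ancillas n (length y) gs"
    using Cons.prems by (auto simp: cnots_into_ancillas_def)
  have control: "relabel gs y ! c = y ! c"
    using Cons.IH[OF gs, of c] flip_count_data[OF gs ct(1)] ct by simp
  show ?case
  proof (cases "j = t")
    case True
    then show ?thesis using Cons.IH[OF gs, of t] ct control by (auto simp: g Let_def flip_count_def)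
  next
    case False
    then show ?thesis using Cons.IH[OF gs, of j] Cons.prems by (auto simp: g Let_def flip_count_def)
  qed
qed

lemma relabel_involution:
  assumes anc: "cnots_into_ancillas n (length y) gs"
  shows "relabel gs (relabel gs y) = y"
proof -
  have data: "relabel gs y ! c = y ! c" if "c < n" "c < length y" for c
    using nth_relabel[OF anc that(2)] flip_count_data[OF anc that(1)] by simp
  have "flip_count gs (relabel gs y) j = flip_count gs y j" for j
    unfolding flip_count_def
  proof (intro arg_cong[where f = length] filter_cong refl)
    fix g assume "g \<in> set gs"
    with anc data show "(case g of CNOT c t \<Rightarrow> t = j \<and> relabel gs y ! c | Phase _ _ \<Rightarrow> False)
      = (case g of CNOT c t \<Rightarrow> t = j \<and> y ! c | Phase _ _ \<Rightarrow> False)"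
      by (auto simp: cnots_into_ancillas_def)
  qed
  moreover have "cnots_into_ancillas n (length (relabel gs y)) gs"
    using anc by simp
  ultimately show ?thesis
    using nth_relabel[OF anc] nth_relabel[of n "relabel gs y" gs]
    by (intro nth_equalityI) auto
qed

fun parity_cnots :: "nat \<Rightarrow> nat list list \<Rightarrow> gate list" where
  "parity_cnots b [] = []"
| "parity_cnots b (S # Ss) = map (\<lambda>i. CNOT i b) S @ parity_cnots (Suc b) Ss"

lemma set_parity_cnots:
  "g \<in> set (parity_cnots b Ss) \<Longrightarrow> \<exists>m < length Ss. \<exists>c \<in> set (Ss ! m). g = CNOT c (b + m)"
proof (induction b Ss rule: parity_cnots.induct)
  case (2 b S Ss)
  show ?case
  proof (cases "g \<in> set (parity_cnots (Suc b) Ss)")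
    case True
    then obtain m c where "m < length Ss" "c \<in> set (Ss ! m)" "g = CNOT c (Suc b + m)"
      using "2.IH" by blast
    then show ?thesis
      by (intro exI[of _ "Suc m"]) auto
  next
    case False
    then show ?thesis using "2.prems" by force
  qed
qed simp

lemma flip_count_parity_cnots:
  "flip_count (parity_cnots b Ss) y j =
     (if b \<le> j \<and> j < b + length Ss then length (filter ((!) y) (Ss ! (j - b))) else 0)"
proof (induction b Ss arbitrary: j rule: parity_cnots.induct)
  case (1 b)
  then show ?case by (auto simp: flip_count_def)
next
  case (2 b S Ss)
  have "flip_count (map (\<lambda>i. CNOT i b) S) y j = (if j = b then length (filter ((!) y) S) else 0)"
    unfolding flip_count_def by (induction S) auto
  then show ?case
    using "2.IH"[of j] by (cases "j = b"; cases "b < j") (auto simp: flip_count_def nth_Cons' Suc_diff_Suc)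
qed

lemma cnots_into_ancillas_parity_cnots:
  "\<forall>S\<in>set Ss. set S \<subseteq> {0..<b} \<Longrightarrow> cnots_into_ancillas b (b + length Ss) (parity_cnots b Ss)"
  unfolding cnots_into_ancillas_def by (fastforce dest: set_parity_cnots)

lemma is_cnot_parity_cnots:
  "\<forall>S\<in>set Ss. set S \<subseteq> {0..<b} \<Longrightarrow> g \<in> set (parity_cnots b Ss) \<Longrightarrow> is_cnot (b + length Ss) g"
  unfolding is_cnot_def by (fastforce dest: set_parity_cnots)

definition parity_on :: "bool list \<Rightarrow> nat list \<Rightarrow> bool" where
  "parity_on x S \<longleftrightarrow> odd (length (filter ((!) x) S))"

lemma parity_on_take: "set S \<subseteq> {0..<n} \<Longrightarrow> parity_on (take n x) S = parity_on x S"
  unfolding parity_on_def by (metis (no_types, lifting) atLeastLessThan_iff filter_cong nth_take subsetD)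

lemma nth_relabel_parity_cnots:
  assumes Ss: "\<forall>S\<in>set Ss. set S \<subseteq> {0..<n}" and y: "length y = n + length Ss"
    and m: "m < length Ss" and clean: "\<not> y ! (n + m)"
  shows "relabel (parity_cnots n Ss) y ! (n + m) = parity_on y (Ss ! m)"
proof -
  have "cnots_into_ancillas n (length y) (parity_cnots n Ss)"
    using cnots_into_ancillas_parity_cnots[OF Ss] y by simp
  from nth_relabel[OF this, of "n + m"] show ?thesis
    using y m clean by (simp add: flip_count_parity_cnots parity_on_def)
qed

lemma embed_eqI: "(\<And>x. length x = d \<Longrightarrow> \<phi> x = \<psi> x) \<Longrightarrow> embed d a \<phi> = embed d a \<psi>"
  by (auto simp: embed_def)

lemma run_parity_phase_circuit:
  assumes Ss: "\<forall>S\<in>set Ss. set S \<subseteq> {0..<n}"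
  shows "run (parity_cnots n Ss @ map2 Phase [n..<n + length Ss] (map zf Ss) @ parity_cnots n Ss)
           (embed n (length Ss) \<psi>)
         = embed n (length Ss) (\<lambda>x. (\<Prod>S\<leftarrow>Ss. if parity_on x S then zf S else 1) * \<psi> x)"
    (is "run (?C @ ?L @ ?C) _ = _")
proof
  fix y
  let ?N = "n + length Ss"
  let ?phase = "\<lambda>x. \<Prod>(j, z)\<leftarrow>zip [n..<?N] (map zf Ss). if x ! j then z else 1"
  have "\<forall>g\<in>set ?C. \<exists>c t. g = CNOT c t"
    by (auto dest: set_parity_cnots)
  then have "run (?C @ ?L @ ?C) (embed n (length Ss) \<psi>) y
      = ?phase (relabel ?C y) * embed n (length Ss) \<psi> (relabel ?C (relabel ?C y))"
    by (simp add: run_append run_CNOTs run_map2_Phase)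
  also have "\<dots> = embed n (length Ss) (\<lambda>x. (\<Prod>S\<leftarrow>Ss. if parity_on x S then zf S else 1) * \<psi> x) y"
  proof (cases "length y = ?N")
    case False
    then show ?thesis by (simp add: embed_def)
  next
    case y: True
    have inv: "relabel ?C (relabel ?C y) = y"
      using relabel_involution cnots_into_ancillas_parity_cnots[OF Ss] y by metis
    show ?thesis
    proof (cases "drop n y = replicate (length Ss) False")
      case False
      then show ?thesis by (simp add: inv embed_def)
    next
      case clean: True
      have "\<not> y ! (n + m)" if "m < length Ss" for m
        using arg_cong[OF clean, of "\<lambda>z. z ! m"] y that by simp
      then have "relabel ?C y ! (n + m) = parity_on (take n y) (Ss ! m)" if "m < length Ss" for m
        using nth_relabel_parity_cnots[OF Ss y that] parity_on_take Ss that by simp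
      then have "?phase (relabel ?C y) = (\<Prod>S\<leftarrow>Ss. if parity_on (take n y) S then zf S else 1)"
        by (intro arg_cong[where f = prod_list] nth_equalityI) auto
      then show ?thesis by (simp add: inv embed_def y clean)
    qed
  qed
  finally show "run (?C @ ?L @ ?C) (embed n (length Ss) \<psi>) y
      = embed n (length Ss) (\<lambda>x. (\<Prod>S\<leftarrow>Ss. if parity_on x S then zf S else 1) * \<psi> x) y" .
qed

lemma sum_subseqs_sign_parity:
  "(\<Sum>S\<leftarrow>subseqs xs. (-1::int) ^ length S * (-1) ^ length (filter P S))
     = (if \<forall>x\<in>set xs. P x then 2 ^ length xs else 0)"
proof (induction xs)
  case (Cons x xs)
  have "(\<Sum>S\<leftarrow>subseqs (x # xs). (-1::int) ^ length S * (-1) ^ length (filter P S))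
      = (if P x then 2 else 0) * (\<Sum>S\<leftarrow>subseqs xs. (-1) ^ length S * (-1) ^ length (filter P S))"
    by (simp add: Let_def o_def sum_list_const_mult[symmetric] flip: sum_list_addf)
  then show ?case
    using Cons.IH by auto
qed simp

lemma prod_subseqs_signed_parity_phases:
  fixes w :: "'a :: field"
  assumes w: "w \<noteq> 0" and xs: "xs \<noteq> []"
  shows "(\<Prod>S\<leftarrow>subseqs xs. if odd (length (filter P S)) then (if odd (length S) then w else inverse w) else 1)
     = (if \<forall>x\<in>set xs. P x then w ^ 2 ^ (length xs - 1) else 1)"
proof -
  define e where
    "e S = (if odd (length (filter P S)) then (if odd (length S) then 1 else -1) else (0::int))" for S
  have "2 * e S = (-1) ^ length S * (-1) ^ length (filter P S) - (-1) ^ length S" for S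
    by (auto simp: e_def)
  then have "2 * (\<Sum>S\<leftarrow>subseqs xs. e S)
      = (\<Sum>S\<leftarrow>subseqs xs. (-1) ^ length S * (-1) ^ length (filter P S))
        - (\<Sum>S\<leftarrow>subseqs xs. (-1) ^ length (filter (\<lambda>_. False) S) * (-1) ^ length S)"
    by (simp add: sum_list_const_mult[symmetric] sum_list_subtractf)
  also have "\<dots> = (if \<forall>x\<in>set xs. P x then 2 ^ length xs else 0)"
    using sum_subseqs_sign_parity[of P xs] sum_subseqs_sign_parity[of "\<lambda>_. False" xs] xs
    by (simp add: mult.commute)
  finally have "(\<Sum>S\<leftarrow>subseqs xs. e S) = (if \<forall>x\<in>set xs. P x then 2 ^ (length xs - 1) else 0)"
    using xs by (cases "length xs") (auto split: if_splits)
  moreover have "(\<Prod>S\<leftarrow>L. w powi e S) = w powi (\<Sum>S\<leftarrow>L. e S)" for L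
    using w by (induction L) (auto simp: power_int_add)
  moreover have "(if odd (length (filter P S)) then (if odd (length S) then w else inverse w) else 1)
      = w powi e S" for S
    by (auto simp: e_def power_int_minus)
  ultimately show ?thesis
    by (auto simp flip: power_int_of_nat)
qed

lemma set_subseqs_upt: "S \<in> set (subseqs [0..<n]) \<Longrightarrow> set S \<subseteq> {0..<n}"
  using subseqs_powset[of "[0..<n]"] by auto

lemma run_controlled_phase_circuit:
  fixes w :: complex and k :: nat
  assumes w: "w \<noteq> 0"
  defines "Ss \<equiv> subseqs [0..<k + 1]"
  shows "run (parity_cnots (k + 1) Ss
              @ map2 Phase [k + 1..<k + 1 + 2 ^ (k + 1)] (map (\<lambda>S. if odd (length S) then w else inverse w) Ss)
              @ parity_cnots (k + 1) Ss)
           (embed (k + 1) (2 ^ (k + 1)) \<psi>)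
         = embed (k + 1) (2 ^ (k + 1)) (\<lambda>x. (if x = replicate (k + 1) True then w ^ 2 ^ k else 1) * \<psi> x)"
proof -
  have Ss_sub: "\<forall>S\<in>set Ss. set S \<subseteq> {0..<k + 1}"
    by (simp add: Ss_def set_subseqs_upt)
  have len: "length Ss = 2 ^ (k + 1)"
    by (simp add: Ss_def length_subseqs)
  have "(\<Prod>S\<leftarrow>Ss. if parity_on x S then (if odd (length S) then w else inverse w) else 1)
      = (if x = replicate (k + 1) True then w ^ 2 ^ k else 1)" if x: "length x = k + 1" for x
  proof -
    have "(\<forall>i\<in>set [0..<k + 1]. x ! i) \<longleftrightarrow> x = replicate (k + 1) True"
      using x by (auto simp del: upt_Suc replicate_Suc intro!: nth_equalityI)
    then show ?thesis
      using prod_subseqs_signed_parity_phases[OF w, of "[0..<k + 1]" "(!) x"]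
      by (simp add: Ss_def parity_on_def)
  qed
  then show ?thesis
    using run_parity_phase_circuit[OF Ss_sub] unfolding len by (auto intro: embed_eqI)
qed

lemma omega_power: "omega l ^ 2 ^ k = cis (pi * 2 powr (1 + real k - real l))"
proof -
  have "real (2 ^ k) * (pi * 2 powr (1 - real l)) = pi * (2 powr real k * 2 powr (1 - real l))"
    by (simp add: powr_realpow)
  also have "\<dots> = pi * 2 powr (1 + real k - real l)"
    by (simp add: powr_add[symmetric] algebra_simps)
  finally have "real (2 ^ k) * (pi * 2 powr (1 - real l)) = pi * 2 powr (1 + real k - real l)" .
  then show ?thesis
    unfolding omega_def DeMoivre by (rule arg_cong)
qed

lemma phase_layer_signed_phases:
  "phase_layer (b + length Ss) l
     (map2 Phase [b..<b + length Ss] (map (\<lambda>S. if odd (length S) then omega l else inverse (omega l)) Ss))"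
  unfolding phase_layer_def by (intro exI[of _ "[b..<b + length Ss]"] exI) auto

theorem theorem4:
  fixes k l :: nat
  assumes "l \<ge> 1" and "k \<le> l - 1"
  shows "\<exists>a pre layer post.
           (\<forall>g\<in>set pre. is_cnot (k + 1 + a) g) \<and>
           (\<forall>g\<in>set post. is_cnot (k + 1 + a) g) \<and>
           phase_layer (k + 1 + a) l layer \<and>
           (\<forall>\<psi>. run (pre @ layer @ post) (embed (k + 1) a \<psi>)
                 = embed (k + 1) a (CkZ k l \<psi>))"
proof -
  define Ss where "Ss = subseqs [0..<k + 1]"
  define pre where "pre = parity_cnots (k + 1) Ss"
  define layer where
    "layer = map2 Phase [k + 1..<k + 1 + 2 ^ (k + 1)]
               (map (\<lambda>S. if odd (length S) then omega l else inverse (omega l)) Ss)"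
  have len: "length Ss = 2 ^ (k + 1)"
    by (simp add: Ss_def length_subseqs)
  have "\<forall>S\<in>set Ss. set S \<subseteq> {0..<k + 1}"
    by (simp add: Ss_def set_subseqs_upt)
  then have "\<forall>g\<in>set pre. is_cnot (k + 1 + 2 ^ (k + 1)) g"
    using is_cnot_parity_cnots[of Ss "k + 1"] unfolding pre_def len[symmetric] by blast
  moreover have "phase_layer (k + 1 + 2 ^ (k + 1)) l layer"
    using phase_layer_signed_phases[of "k + 1" Ss l] unfolding layer_def len .
  moreover have "run (pre @ layer @ pre) (embed (k + 1) (2 ^ (k + 1)) \<psi>)
      = embed (k + 1) (2 ^ (k + 1)) (CkZ k l \<psi>)" for \<psi>
    using run_controlled_phase_circuit[of "omega l" k \<psi>]
    unfolding pre_def layer_def Ss_def CkZ_def omega_power by (simp add: omega_def)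
  ultimately show ?thesis
    by (intro exI[of _ "2 ^ (k + 1)"] exI[of _ pre] exI[of _ layer] exI[of _ pre]) simp
qed

end
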